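(* Let $(G',\Sigma')$ be a signed graph on vertex set $\{v_1,\dots,v_k\}$, and for each $i\in\{1,\dots,k\}$ let $(G_i,\Sigma_i)$ be a signed graph, the sets $V(G_i)$ pairwise disjoint. Let $(G,\Sigma)$ be the signed graph obtained from $(G',\Sigma')$ by substituting $v_i$ with $(G_i,\Sigma_i)$ for every $i$. For each $i$, let $n_i=|V(G_i)|$, $m_i=\sum_{v_j\in N_{G'}(v_i)}n_j$, and let $\{\lambda_{i,1},\dots,\lambda_{i,n_i}\}$ be the spectrum (multiset of eigenvalues) of $L(G_i,\Sigma_i)$. Let $M$ be the $k\times k$ matrix with $M_{i,i}=\lambda_{i,n_i}+m_i$ and, for $i\neq j$, $M_{i,j}=n_j$ if $v_iv_j\in\Sigma'$, $M_{i,j}=-n_j$ if $v_iv_j\in E(G')\setminus\Sigma'$, and $M_{i,j}=0$ otherwise; let $\{\mu_1,\dots,\mu_k\}$ be the spectrum of $M$. If for every $i$ the all-ones vector $\mathbf{1}_{n_i}$ is a $\lambda_{i,n_i}$-eigenvector of $L(G_i,\Sigma_i)$, then the spectrum of $L(G,\Sigma)$ is the multiset \[\{\mu_i:i\in[k]\}\cup\bigcup_{i=1}^k\{\lambda_{i,j}+m_i:j\in[n_i-1]\}.\]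
   Context: All graphs are finite and simple. A signed graph is a pair $(G,\Sigma)$ with $\Sigma\subseteq E(G)$; edges in $\Sigma$ are odd, others even. The signed Laplacian is $L(G,\Sigma)=D(G)-A(G,\Sigma)$, $D(G)$ the diagonal degree matrix, $A(G,\Sigma)$ having $(i,j)$-entry $1$ for an even edge, $-1$ for an odd edge, $0$ otherwise. For signed graphs $(G,\Sigma)$, $(H,\Gamma)$ with disjoint vertex sets and $v\in V(G)$, substituting $v$ with $(H,\Gamma)$ yields the signed graph obtained from the disjoint union of $(G-v,\Sigma\setminus\delta(v))$ and $(H,\Gamma)$ (where $\delta(v)$ is the set of edges at $v$) by adding all edges $uv'$ with $u\in V(H)$, $v'\in N_G(v)$, where $uv'$ is odd exactly when $vv'$ is odd in $(G,\Sigma)$. Substituting every $v_i$ of $G'$ with $(G_i,\Sigma_i)$ thus gives the signed graph on $\bigcup_iV(G_i)$ containing each $(G_i,\Sigma_i)$, together with, for each edge $v_iv_j$ of $G'$, all edges between $V(G_i)$ and $V(G_j)$, each having the parity of $v_iv_j$ in $(G',\Sigma')$, and no other edges. $[m]=\{1,\dots,m\}$. *)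

theory Defs
  imports "Jordan_Normal_Form.Char_Poly"
begin

text \<open>A signed graph on a finite vertex set of naturals: vertices, edges (2-element sets),
  and the set of odd edges.\<close>
record sgraph =
  sV :: "nat set"
  sE :: "nat set set"
  sSig :: "nat set set"

definition wf_sgraph :: "sgraph \<Rightarrow> bool" where
  "wf_sgraph G \<longleftrightarrow> finite (sV G) \<and>
     sE G \<subseteq> {{u, w} | u w. u \<in> sV G \<and> w \<in> sV G \<and> u \<noteq> w} \<and>
     sSig G \<subseteq> sE G"

definition sdeg :: "sgraph \<Rightarrow> nat \<Rightarrow> nat" where
  "sdeg G v = card {e \<in> sE G. v \<in> e}"

definition sadj :: "sgraph \<Rightarrow> nat \<Rightarrow> nat \<Rightarrow> real" where
  "sadj G u w = (if {u, w} \<in> sE G then (if {u, w} \<in> sSig G then -1 else 1) else 0)"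

text \<open>Vertices are enumerated in increasing order; the spectrum does not depend on this.\<close>
definition vlist :: "sgraph \<Rightarrow> nat list" where
  "vlist G = sorted_list_of_set (sV G)"

definition slap :: "sgraph \<Rightarrow> real mat" where
  "slap G = mat (card (sV G)) (card (sV G))
     (\<lambda>(a, b). (if a = b then real (sdeg G (vlist G ! a)) else 0)
               - sadj G (vlist G ! a) (vlist G ! b))"

definition spec :: "real mat \<Rightarrow> complex multiset" where
  "spec A = proots (char_poly (map_mat complex_of_real A))"

text \<open>Substitution of every vertex i (i < k) of G' (vertex set {0..<k}) by Gs i.\<close>
definition subst_all :: "sgraph \<Rightarrow> nat \<Rightarrow> (nat \<Rightarrow> sgraph) \<Rightarrow> sgraph" where
  "subst_all G' k Gs =
    \<lparr> sV = (\<Union>i<k. sV (Gs i)),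
      sE = (\<Union>i<k. sE (Gs i)) \<union>
           {{u, w} | i j u w. i < k \<and> j < k \<and> {i, j} \<in> sE G' \<and> u \<in> sV (Gs i) \<and> w \<in> sV (Gs j)},
      sSig = (\<Union>i<k. sSig (Gs i)) \<union>
           {{u, w} | i j u w. i < k \<and> j < k \<and> {i, j} \<in> sSig G' \<and> u \<in> sV (Gs i) \<and> w \<in> sV (Gs j)} \<rparr>"

definition nbsize :: "sgraph \<Rightarrow> nat \<Rightarrow> (nat \<Rightarrow> sgraph) \<Rightarrow> nat \<Rightarrow> nat" where
  "nbsize G' k Gs i = (\<Sum>j\<in>{j. j < k \<and> {i, j} \<in> sE G'}. card (sV (Gs j)))"

text \<open>The k x k quotient matrix M; lam i is the eigenvalue lambda_{i,n_i}.\<close>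
definition quotM :: "sgraph \<Rightarrow> nat \<Rightarrow> (nat \<Rightarrow> sgraph) \<Rightarrow> (nat \<Rightarrow> complex) \<Rightarrow> complex mat" where
  "quotM G' k Gs lam = mat k k (\<lambda>(i, j).
     if i = j then lam i + of_nat (nbsize G' k Gs i)
     else if {i, j} \<in> sSig G' then of_nat (card (sV (Gs j)))
     else if {i, j} \<in> sE G' then - of_nat (card (sV (Gs j)))
     else 0)"

definition cspec :: "complex mat \<Rightarrow> complex multiset" where
  "cspec A = proots (char_poly A)"

end

theory Submission
  imports Defs
begin

text \<open>
  Let V be the vertex set of the substituted graph and W_i = V(G_i).  An entry of L(G,Sigma)
  between different blocks W_i and W_j is the constant -A(G',Sigma')_ij, and since the all-ones
  vector is an eigenvector of L(G_i,Sigma_i), every row of a diagonal block sums to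
  lambda_{i,n_i} + m_i: the partition of V into the blocks is equitable, with quotient matrix M.
  Pick a representative r_i in every block, add all columns of a block to the column of its
  representative, and subtract the row of the representative from the other rows of the block.
  This unimodular change of basis makes xI - L block triangular: the representatives carry
  xI - M, and the remaining vertices split into one diagonal block per i, the reduced matrix
  L(G_i)_uw - L(G_i)_{r_i w} shifted by m_i.  The same computation for G_i alone shows that the
  reduced matrix has the spectrum of L(G_i,Sigma_i) with one copy of lambda_{i,n_i} removed.
\<close>

section \<open>Determinants of matrices indexed by finite sets\<close>

definition det_on :: "'i set \<Rightarrow> ('i \<Rightarrow> 'i \<Rightarrow> 'a::comm_ring_1) \<Rightarrow> 'a" where
  "det_on I f = (\<Sum>p | p permutes I. of_int (sign p) * (\<Prod>u\<in>I. f u (p u)))"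

definition index_mat :: "'i list \<Rightarrow> ('i \<Rightarrow> 'i \<Rightarrow> 'a) \<Rightarrow> 'a mat" where
  "index_mat xs f = mat (length xs) (length xs) (\<lambda>(a, b). f (xs ! a) (xs ! b))"

lemma index_mat_carrier [simp]: "index_mat xs f \<in> carrier_mat (length xs) (length xs)"
  by (simp add: index_mat_def)

lemma det_on_cong:
  assumes "\<And>u w. u \<in> I \<Longrightarrow> w \<in> I \<Longrightarrow> f u w = g u w"
  shows "det_on I f = det_on I g"
  unfolding det_on_def using assms
  by (intro sum.cong refl arg_cong2[where f = "(*)"] prod.cong) (auto simp: permutes_in_image)

lemma det_on_reindex:
  assumes "finite J" and "inj_on h J"
  shows "det_on (h ` J) f = det_on J (\<lambda>a b. f (h a) (h b))"
proof -
  have h: "bij_betw h J (h ` J)"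
    using assms(2) by (rule inj_on_imp_bij_betw)
  define \<mu> where "\<mu> p = map_permutation J h p" for p
  have \<mu>_eq: "\<mu> = (\<lambda>p x. if x \<in> h ` J then h (p (inv_into J h x)) else x)"
    by (auto simp: \<mu>_def map_permutation_def restrict_id_def fun_eq_iff)
  have term_eq: "of_int (sign (\<mu> p)) * (\<Prod>u\<in>h ` J. f u (\<mu> p u))
      = of_int (sign p) * (\<Prod>a\<in>J. f (h a) (h (p a)))" if p: "p permutes J" for p
  proof -
    have "(\<Prod>u\<in>h ` J. f u (\<mu> p u)) = (\<Prod>a\<in>J. f (h a) (\<mu> p (h a)))"
      using assms(2) by (simp add: prod.reindex)
    also have "\<dots> = (\<Prod>a\<in>J. f (h a) (h (p a)))"
      using assms(2) by (intro prod.cong) (simp_all add: \<mu>_def map_permutation_apply)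
    finally show ?thesis
      using sign_map_permutation[OF assms(2) p assms(1)] by (simp add: \<mu>_def)
  qed
  have "det_on (h ` J) f = (\<Sum>p | p permutes J. of_int (sign (\<mu> p)) * (\<Prod>u\<in>h ` J. f u (\<mu> p u)))"
    unfolding det_on_def \<mu>_eq by (rule sum.reindex_bij_betw[OF bij_betw_permutations[OF h], symmetric])
  also have "\<dots> = det_on J (\<lambda>a b. f (h a) (h b))"
    unfolding det_on_def by (intro sum.cong refl) (simp add: term_eq)
  finally show ?thesis .
qed

lemma det_index_mat:
  assumes "distinct xs"
  shows "det (index_mat xs f) = det_on (set xs) f"
proof -
  have "det (index_mat xs f) = det_on {0..<length xs} (\<lambda>a b. f (xs ! a) (xs ! b))"
    unfolding det_def det_on_def index_mat_def
    by (auto intro!: sum.cong arg_cong2[where f = "(*)"] prod.cong simp: permutes_in_image)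
  also have "\<dots> = det_on ((!) xs ` {0..<length xs}) f"
    using assms by (intro det_on_reindex[symmetric] inj_on_nth) auto
  finally show ?thesis
    by (simp add: nth_image)
qed

lemma index_mat_mult:
  assumes "distinct xs"
  shows "index_mat xs f * index_mat xs g = index_mat xs (\<lambda>u w. \<Sum>z\<in>set xs. f u z * g z w)"
proof (rule eq_matI)
  have xs: "bij_betw ((!) xs) {..<length xs} (set xs)"
    using assms by (rule bij_betw_nth) simp_all
  fix a b assume "a < dim_row (index_mat xs (\<lambda>u w. \<Sum>z\<in>set xs. f u z * g z w))"
    and "b < dim_col (index_mat xs (\<lambda>u w. \<Sum>z\<in>set xs. f u z * g z w))"
  then show "(index_mat xs f * index_mat xs g) $$ (a, b) = index_mat xs (\<lambda>u w. \<Sum>z\<in>set xs. f u z * g z w) $$ (a, b)"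
    using sum.reindex_bij_betw[OF xs, of "\<lambda>z. f (xs ! a) z * g z (xs ! b)"]
    by (simp add: index_mat_def scalar_prod_def atLeast0LessThan)
qed (simp_all add: index_mat_def)

lemma index_mat_identity:
  assumes "distinct xs"
  shows "index_mat xs (\<lambda>u w. if u = w then 1 else 0) = 1\<^sub>m (length xs)"
  using assms by (intro eq_matI) (auto simp: index_mat_def nth_eq_iff_index_eq)

lemma det_on_mult:
  assumes "finite I"
  shows "det_on I (\<lambda>u w. \<Sum>z\<in>I. f u z * g z w) = det_on I f * det_on I g"
proof -
  obtain xs where xs: "distinct xs" "set xs = I"
    using finite_distinct_list[OF assms] by blast
  show ?thesis
    using det_mult[OF index_mat_carrier index_mat_carrier, of xs f g]
    by (simp add: index_mat_mult det_index_mat xs flip: xs(2))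
qed

lemma det_on_identity:
  assumes "finite I"
  shows "det_on I (\<lambda>u w. if u = w then 1 else 0) = 1"
proof -
  obtain xs where xs: "distinct xs" "set xs = I"
    using finite_distinct_list[OF assms] by blast
  show ?thesis
    by (simp add: det_index_mat[OF xs(1), symmetric] index_mat_identity[OF xs(1)] flip: xs(2))
qed

lemma index_mat_append:
  "index_mat (xs @ ys) f = four_block_mat (index_mat xs f)
     (mat (length xs) (length ys) (\<lambda>(a, b). f (xs ! a) (ys ! b)))
     (mat (length ys) (length xs) (\<lambda>(a, b). f (ys ! a) (xs ! b))) (index_mat ys f)"
  by (intro eq_matI) (auto simp: index_mat_def nth_append)

lemma det_on_block_triangular:
  fixes f :: "'i \<Rightarrow> 'i \<Rightarrow> 'a::idom"
  assumes "finite I" and "S \<subseteq> I" and zero: "\<And>u w. u \<in> I - S \<Longrightarrow> w \<in> S \<Longrightarrow> f u w = 0"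
  shows "det_on I f = det_on S f * det_on (I - S) f"
proof -
  obtain xs where xs: "distinct xs" "set xs = S"
    using finite_distinct_list[OF finite_subset[OF assms(2,1)]] by blast
  obtain ys where ys: "distinct ys" "set ys = I - S"
    using finite_distinct_list[of "I - S"] assms(1) by blast
  have "mat (length ys) (length xs) (\<lambda>(a, b). f (ys ! a) (xs ! b)) = 0\<^sub>m (length ys) (length xs)"
    using zero nth_mem[of _ xs] nth_mem[of _ ys] by (intro eq_matI) (auto simp: xs(2) ys(2))
  then have "det (index_mat (xs @ ys) f) = det (index_mat xs f) * det (index_mat ys f)"
    unfolding index_mat_append by (intro det_four_block_mat_lower_left_zero) auto
  moreover have "distinct (xs @ ys)" "set (xs @ ys) = I"
    using xs ys assms(2) by auto
  ultimately show ?thesis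
    using xs ys by (simp add: det_index_mat)
qed

lemma det_on_block_diagonal:
  fixes f :: "'i \<Rightarrow> 'i \<Rightarrow> 'a::idom"
  assumes "finite K" and "\<And>i. i \<in> K \<Longrightarrow> finite (U i)" and "disjoint_family_on U K"
    and "\<And>i j u w. i \<in> K \<Longrightarrow> j \<in> K \<Longrightarrow> i \<noteq> j \<Longrightarrow> u \<in> U i \<Longrightarrow> w \<in> U j \<Longrightarrow> f u w = 0"
  shows "det_on (\<Union>i\<in>K. U i) f = (\<Prod>i\<in>K. det_on (U i) f)"
  using assms
proof (induction K rule: finite_induct)
  case empty
  then show ?case by (simp add: det_on_def)
next
  case (insert i K)
  have disj: "(U i \<union> (\<Union>j\<in>K. U j)) - U i = (\<Union>j\<in>K. U j)"
    using insert.prems(2) insert.hyps(2) by (auto simp: disjoint_family_on_def)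
  have "det_on (U i \<union> (\<Union>j\<in>K. U j)) f = det_on (U i) f * det_on (\<Union>j\<in>K. U j) f"
  proof (subst det_on_block_triangular[of _ "U i"])
    show "finite (U i \<union> (\<Union>j\<in>K. U j))"
      using insert.hyps(1) insert.prems(1) by simp
    show "f u w = 0" if "u \<in> U i \<union> (\<Union>j\<in>K. U j) - U i" and "w \<in> U i" for u w
      using that insert.prems(3)[of _ i u w] insert.hyps(2) by auto
  qed (simp_all add: disj)
  also have "det_on (\<Union>j\<in>K. U j) f = (\<Prod>j\<in>K. det_on (U j) f)"
  proof (rule insert.IH)
    show "disjoint_family_on U K"
      using insert.prems(2) by (rule disjoint_family_on_mono[rotated]) blast
  qed (use insert.prems in blast)+
  finally show ?case
    using insert.hyps by simp
qed

lemma det_on_singleton: "det_on {a} f = f a a"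
  by (simp add: det_on_def)

lemma det_on_pcompose: "det_on I (\<lambda>u w. f u w \<circ>\<^sub>p q) = det_on I f \<circ>\<^sub>p q"
  by (simp add: det_on_def pcompose_sum pcompose_mult pcompose_prod pcompose_smult of_int_poly)

lemma det_on_similar:
  assumes "finite V"
    and inverse: "\<And>u w. u \<in> V \<Longrightarrow> w \<in> V \<Longrightarrow> (\<Sum>z\<in>V. Q u z * P z w) = (if u = w then 1 else 0)"
  shows "det_on V (\<lambda>u w. \<Sum>z\<in>V. Q u z * (\<Sum>y\<in>V. X z y * P y w)) = det_on V X"
proof -
  have "det_on V Q * det_on V P = det_on V (\<lambda>u w. \<Sum>z\<in>V. Q u z * P z w)"
    using \<open>finite V\<close> by (rule det_on_mult[symmetric])
  also have "\<dots> = det_on V (\<lambda>u w. if u = w then 1 else 0)"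
    by (rule det_on_cong) (rule inverse)
  also have "\<dots> = 1"
    using \<open>finite V\<close> by (rule det_on_identity)
  finally have "det_on V Q * det_on V P = 1" .
  then show ?thesis
    using \<open>finite V\<close> by (simp add: det_on_mult) (metis mult.left_commute mult.right_neutral)
qed

section \<open>Equitable partitions\<close>

lemma sum_retraction_fibre:
  assumes "finite V" and "w \<in> V" and idem: "\<And>u. u \<in> V \<Longrightarrow> \<rho> (\<rho> u) = \<rho> u"
  shows "f w + (\<Sum>z | z \<in> V \<and> \<rho> z \<noteq> z \<and> \<rho> z = w. f z)
           = (if \<rho> w = w then (\<Sum>z | z \<in> V \<and> \<rho> z = w. f z) else f w)"
proof (cases "\<rho> w = w")
  case True
  then have "{z. z \<in> V \<and> \<rho> z = w} = insert w {z. z \<in> V \<and> \<rho> z \<noteq> z \<and> \<rho> z = w}"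
    using \<open>w \<in> V\<close> by auto
  then show ?thesis
    using True \<open>finite V\<close> by simp
next
  case False
  then have no_fibre: "{z. z \<in> V \<and> \<rho> z \<noteq> z \<and> \<rho> z = w} = {}"
    using idem by auto
  show ?thesis
    unfolding no_fibre using False by simp
qed

text \<open>
  The right-hand side is Q X P, where P adds each column z to the column of \<rho> z and
  its inverse Q subtracts from each row u with \<rho> u \<noteq> u the row of \<rho> u.
\<close>

lemma det_on_retraction_shear:
  fixes X :: "'i \<Rightarrow> 'i \<Rightarrow> 'a::comm_ring_1" and \<rho> :: "'i \<Rightarrow> 'i"
  assumes "finite V" and into: "\<And>u. u \<in> V \<Longrightarrow> \<rho> u \<in> V" and idem: "\<And>u. u \<in> V \<Longrightarrow> \<rho> (\<rho> u) = \<rho> u"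
  defines "C \<equiv> \<lambda>u w. if \<rho> w = w then (\<Sum>z | z \<in> V \<and> \<rho> z = w. X u z) else X u w"
  shows "det_on V X = det_on V (\<lambda>u w. if \<rho> u = u then C u w else C u w - C (\<rho> u) w)"
proof -
  define P :: "'i \<Rightarrow> 'i \<Rightarrow> 'a"
    where "P u w = (if u = w then 1 else 0) + (if \<rho> u \<noteq> u \<and> w = \<rho> u then 1 else 0)" for u w
  define Q :: "'i \<Rightarrow> 'i \<Rightarrow> 'a"
    where "Q u w = (if u = w then 1 else 0) - (if \<rho> u \<noteq> u \<and> w = \<rho> u then 1 else 0)" for u w
  have left: "(\<Sum>z\<in>V. Q u z * Z z w) = (if \<rho> u = u then Z u w else Z u w - Z (\<rho> u) w)"
    if "u \<in> V" for u w and Z :: "'i \<Rightarrow> 'i \<Rightarrow> 'a"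
    using that into \<open>finite V\<close>
    by (simp add: Q_def left_diff_distrib sum_subtractf if_distrib[of "\<lambda>c. c * _"] sum.If_cases)
  have right: "(\<Sum>z\<in>V. X u z * P z w) = C u w" if "w \<in> V" for u w
  proof -
    have "(\<Sum>z\<in>V. X u z * P z w)
        = (\<Sum>z\<in>V. if z = w then X u z else 0) + (\<Sum>z\<in>V. if \<rho> z \<noteq> z \<and> w = \<rho> z then X u z else 0)"
      by (simp add: P_def distrib_left sum.distrib if_distrib[of "\<lambda>c. _ * c"] cong: if_cong)
    also have "\<dots> = X u w + (\<Sum>z | z \<in> V \<and> \<rho> z \<noteq> z \<and> \<rho> z = w. X u z)"
      using that \<open>finite V\<close> by (simp add: sum.If_cases Int_def conj_commute eq_commute[of w])
    also have "\<dots> = C u w"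
      unfolding C_def using \<open>finite V\<close> that idem by (rule sum_retraction_fibre)
    finally show ?thesis .
  qed
  have P_fixed: "P u w = (if u = w then 1 else 0)" if "\<rho> u = u" for u w
    using that by (simp add: P_def)
  have P_moved: "P u w = (if u = w then 1 else 0) + (if \<rho> u = w then 1 else 0)" if "\<rho> u \<noteq> u" for u w
    using that by (simp add: P_def)
  have "det_on V (\<lambda>u w. if \<rho> u = u then C u w else C u w - C (\<rho> u) w)
      = det_on V (\<lambda>u w. \<Sum>z\<in>V. Q u z * (\<Sum>y\<in>V. X z y * P y w))"
    by (rule det_on_cong) (simp add: left right)
  also have "\<dots> = det_on V X"
  proof (rule det_on_similar[OF \<open>finite V\<close>])
    show "(\<Sum>z\<in>V. Q u z * P z w) = (if u = w then 1 else 0)" if "u \<in> V" for u w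
    proof (cases "\<rho> u = u")
      case True
      show ?thesis
        unfolding left[OF that] P_fixed[OF True] using True by simp
    next
      case False
      show ?thesis
        unfolding left[OF that] P_moved[OF False] P_fixed[OF idem[OF that]] using False by simp
    qed
  qed
  finally show ?thesis ..
qed

text \<open>For u outside every block the value is unspecified.\<close>

definition block_rep :: "'k set \<Rightarrow> ('k \<Rightarrow> 'i set) \<Rightarrow> ('k \<Rightarrow> 'i) \<Rightarrow> 'i \<Rightarrow> 'i" where
  "block_rep K W r u = r (THE i. i \<in> K \<and> u \<in> W i)"

lemma block_rep_eq:
  assumes "disjoint_family_on W K" and "i \<in> K" and "u \<in> W i"
  shows "block_rep K W r u = r i"
proof -
  have "(THE i. i \<in> K \<and> u \<in> W i) = i"
    using assms by (intro the_equality) (auto simp: disjoint_family_on_def)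
  then show ?thesis
    by (simp add: block_rep_def)
qed

lemma inj_on_block_representatives:
  assumes disj: "disjoint_family_on W K" and rep: "\<And>i. i \<in> K \<Longrightarrow> r i \<in> W i"
  shows "inj_on r K"
proof (rule inj_onI)
  fix i j assume i: "i \<in> K" and j: "j \<in> K" and "r i = r j"
  then have "r i \<in> W i \<inter> W j"
    using rep[OF i] rep[OF j] by simp
  then show "i = j"
    using disjoint_family_onD[OF disj i j] by blast
qed

lemma block_rep_fibre:
  assumes disj: "disjoint_family_on W K" and rep: "\<And>i. i \<in> K \<Longrightarrow> r i \<in> W i" and "j \<in> K"
  shows "{z. z \<in> (\<Union>i\<in>K. W i) \<and> block_rep K W r z = r j} = W j"
proof (intro equalityI subsetI)
  fix z assume "z \<in> {z. z \<in> (\<Union>i\<in>K. W i) \<and> block_rep K W r z = r j}"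
  then obtain i where i: "i \<in> K" "z \<in> W i" and "block_rep K W r z = r j"
    by blast
  then have "r i = r j"
    using block_rep_eq[OF disj i] by simp
  then have "i = j"
    using inj_on_block_representatives[OF disj rep] i(1) \<open>j \<in> K\<close> by (simp add: inj_on_eq_iff)
  with i show "z \<in> W j"
    by simp
next
  fix z assume "z \<in> W j"
  then show "z \<in> {z. z \<in> (\<Union>i\<in>K. W i) \<and> block_rep K W r z = r j}"
    using block_rep_eq[OF disj \<open>j \<in> K\<close>] \<open>j \<in> K\<close> by blast
qed

lemma block_rep_retraction:
  assumes disj: "disjoint_family_on W K" and rep: "\<And>i. i \<in> K \<Longrightarrow> r i \<in> W i"
    and "u \<in> (\<Union>i\<in>K. W i)"
  shows "block_rep K W r u \<in> (\<Union>i\<in>K. W i)" and "block_rep K W r (block_rep K W r u) = block_rep K W r u"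
proof -
  obtain i where i: "i \<in> K" "u \<in> W i"
    using assms(3) by blast
  then show "block_rep K W r u \<in> (\<Union>i\<in>K. W i)" and "block_rep K W r (block_rep K W r u) = block_rep K W r u"
    using block_rep_eq[OF disj i] block_rep_eq[OF disj i(1) rep[OF i(1)]] rep[OF i(1)] by auto
qed

lemma det_on_equitable_partition_triangular:
  fixes X :: "'i \<Rightarrow> 'i \<Rightarrow> 'a::idom" and W :: "'k \<Rightarrow> 'i set"
  assumes "finite K" and fin: "\<And>i. i \<in> K \<Longrightarrow> finite (W i)" and disj: "disjoint_family_on W K"
    and rep: "\<And>i. i \<in> K \<Longrightarrow> r i \<in> W i"
    and rows: "\<And>i j u. i \<in> K \<Longrightarrow> j \<in> K \<Longrightarrow> u \<in> W i \<Longrightarrow> (\<Sum>z\<in>W j. X u z) = (\<Sum>z\<in>W j. X (r i) z)"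
  shows "det_on (\<Union>i\<in>K. W i) X = det_on K (\<lambda>i j. \<Sum>z\<in>W j. X (r i) z)
           * det_on (\<Union>i\<in>K. W i - {r i}) (\<lambda>u w. X u w - X (block_rep K W r u) w)"
proof -
  define V where "V = (\<Union>i\<in>K. W i)"
  define \<rho> where "\<rho> = block_rep K W r"
  have \<rho>: "\<rho> u = r i" if "i \<in> K" "u \<in> W i" for i u
    using disj that by (simp add: \<rho>_def block_rep_eq)
  define C where "C u w = (if \<rho> w = w then (\<Sum>z | z \<in> V \<and> \<rho> z = w. X u z) else X u w)" for u w
  define Y where "Y u w = (if \<rho> u = u then C u w else C u w - C (\<rho> u) w)" for u w
  have fibre: "{z. z \<in> V \<and> \<rho> z = r j} = W j" if "j \<in> K" for j
    unfolding V_def \<rho>_def by (rule block_rep_fibre[OF disj rep that])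
  have C_rep: "C u (r j) = (\<Sum>z\<in>W j. X u z)" if "j \<in> K" for u j
    using that rep by (simp add: C_def \<rho> fibre)
  have Y_rep: "Y (r i) w = C (r i) w" if "i \<in> K" for i w
    using that rep by (simp add: Y_def \<rho>)
  have Y_other: "Y u w = C u w - C (r i) w" if "i \<in> K" "u \<in> W i - {r i}" for i u w
    using that by (auto simp: Y_def \<rho>)
  have "finite V"
    using \<open>finite K\<close> fin by (simp add: V_def)
  moreover have "\<rho> u \<in> V" "\<rho> (\<rho> u) = \<rho> u" if "u \<in> V" for u
    using block_rep_retraction[OF disj rep] that by (simp_all add: V_def \<rho>_def)
  ultimately have "det_on V X = det_on V Y"
    unfolding Y_def C_def by (intro det_on_retraction_shear) simp_all
  also have "\<dots> = det_on (r ` K) Y * det_on (V - r ` K) Y"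
  proof (rule det_on_block_triangular[OF \<open>finite V\<close>])
    show "r ` K \<subseteq> V"
      using rep by (auto simp: V_def)
    show "Y u w = 0" if u: "u \<in> V - r ` K" and w: "w \<in> r ` K" for u w
    proof -
      obtain i where i: "i \<in> K" "u \<in> W i"
        using u by (auto simp: V_def)
      obtain j where j: "j \<in> K" "w = r j"
        using w by auto
      have "u \<in> W i - {r i}"
        using u i by auto
      then show ?thesis
        using rows[OF i(1) j(1) i(2)] j by (simp add: Y_other[OF i(1)] C_rep)
    qed
  qed
  also have "det_on (r ` K) Y = det_on K (\<lambda>i j. \<Sum>z\<in>W j. X (r i) z)"
  proof -
    have "det_on (r ` K) Y = det_on K (\<lambda>i j. Y (r i) (r j))"
      using \<open>finite K\<close> inj_on_block_representatives[OF disj rep] by (rule det_on_reindex)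
    also have "\<dots> = det_on K (\<lambda>i j. \<Sum>z\<in>W j. X (r i) z)"
      using rep by (intro det_on_cong) (simp add: Y_rep C_rep)
    finally show ?thesis .
  qed
  also have "V - r ` K = (\<Union>i\<in>K. W i - {r i})"
  proof -
    have "u \<in> r ` K \<longleftrightarrow> u = r i" if "i \<in> K" "u \<in> W i" for i u
      using inj_on_block_representatives[OF disj rep] rep that \<rho>
      by (metis \<rho>_def block_rep_eq disj image_iff)
    then show ?thesis
      by (auto simp: V_def)
  qed
  also have "det_on (\<Union>i\<in>K. W i - {r i}) Y = det_on (\<Union>i\<in>K. W i - {r i}) (\<lambda>u w. X u w - X (\<rho> u) w)"
    using rep by (intro det_on_cong) (auto simp: Y_other C_def \<rho>)
  finally show ?thesis
    by (simp add: V_def \<rho>_def)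
qed

lemma det_on_equitable_partition:
  fixes X :: "'i \<Rightarrow> 'i \<Rightarrow> 'a::idom" and W :: "'k \<Rightarrow> 'i set"
  assumes "finite K" and fin: "\<And>i. i \<in> K \<Longrightarrow> finite (W i)" and disj: "disjoint_family_on W K"
    and rep: "\<And>i. i \<in> K \<Longrightarrow> r i \<in> W i"
    and rows: "\<And>i j u. i \<in> K \<Longrightarrow> j \<in> K \<Longrightarrow> u \<in> W i \<Longrightarrow> (\<Sum>z\<in>W j. X u z) = (\<Sum>z\<in>W j. X (r i) z)"
    and cross: "\<And>i j u w. i \<in> K \<Longrightarrow> j \<in> K \<Longrightarrow> i \<noteq> j \<Longrightarrow> u \<in> W i \<Longrightarrow> w \<in> W j \<Longrightarrow> X u w = X (r i) w"
  shows "det_on (\<Union>i\<in>K. W i) X = det_on K (\<lambda>i j. \<Sum>z\<in>W j. X (r i) z)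
           * (\<Prod>i\<in>K. det_on (W i - {r i}) (\<lambda>u w. X u w - X (r i) w))"
proof -
  let ?Z = "\<lambda>u w. X u w - X (block_rep K W r u) w"
  have "det_on (\<Union>i\<in>K. W i - {r i}) ?Z = (\<Prod>i\<in>K. det_on (W i - {r i}) ?Z)"
  proof (rule det_on_block_diagonal[OF \<open>finite K\<close>])
    show "disjoint_family_on (\<lambda>i. W i - {r i}) K"
      using disj by (auto simp: disjoint_family_on_def)
    show "?Z u w = 0" if "i \<in> K" "j \<in> K" "i \<noteq> j" "u \<in> W i - {r i}" "w \<in> W j - {r j}" for i j u w
      using that disj cross[of i j u w] by (simp add: block_rep_eq)
  qed (use fin in simp)
  also have "\<dots> = (\<Prod>i\<in>K. det_on (W i - {r i}) (\<lambda>u w. X u w - X (r i) w))"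
    using disj by (intro prod.cong refl det_on_cong) (simp add: block_rep_eq)
  finally show ?thesis
    using det_on_equitable_partition_triangular[where K = K and W = W and r = r and X = X, OF assms(1-5)]
    by simp
qed

section \<open>Characteristic polynomials\<close>

definition char_poly_on :: "'i set \<Rightarrow> ('i \<Rightarrow> 'i \<Rightarrow> 'a::comm_ring_1) \<Rightarrow> 'a poly" where
  "char_poly_on I f = det_on I (\<lambda>u w. (if u = w then [:0, 1:] else 0) - [:f u w:])"

lemma char_poly_index_mat:
  assumes "distinct xs"
  shows "char_poly (index_mat xs f) = char_poly_on (set xs) f"
proof -
  have "char_poly_matrix (index_mat xs f) = index_mat xs (\<lambda>u w. (if u = w then [:0, 1:] else 0) - [:f u w:])"
    using assms by (intro eq_matI) (auto simp: char_poly_matrix_def index_mat_def nth_eq_iff_index_eq)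
  then show ?thesis
    using assms by (simp add: char_poly_def char_poly_on_def det_index_mat)
qed

lemma char_poly_on_nonzero:
  assumes "finite I"
  shows "char_poly_on I f \<noteq> 0"
proof -
  obtain xs where xs: "distinct xs" "set xs = I"
    using finite_distinct_list[OF assms] by blast
  have "coeff (char_poly (index_mat xs f)) (length xs) = 1"
    using degree_monic_char_poly[OF index_mat_carrier] by blast
  then have "char_poly (index_mat xs f) \<noteq> 0"
    by (metis coeff_0 zero_neq_one)
  then show ?thesis
    by (metis char_poly_index_mat xs)
qed

lemma char_poly_on_shift:
  "char_poly_on I (\<lambda>u w. f u w + (if u = w then c else 0)) = char_poly_on I f \<circ>\<^sub>p [:-c, 1:]"
  unfolding char_poly_on_def det_on_pcompose[symmetric]
  by (rule det_on_cong) (simp add: pcompose_diff)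

lemma char_poly_on_equitable_partition:
  fixes L :: "'i \<Rightarrow> 'i \<Rightarrow> 'a::idom" and W :: "'k \<Rightarrow> 'i set"
  assumes "finite K" and fin: "\<And>i. i \<in> K \<Longrightarrow> finite (W i)" and disj: "disjoint_family_on W K"
    and rep: "\<And>i. i \<in> K \<Longrightarrow> r i \<in> W i"
    and rows: "\<And>i j u. i \<in> K \<Longrightarrow> j \<in> K \<Longrightarrow> u \<in> W i \<Longrightarrow> (\<Sum>z\<in>W j. L u z) = (\<Sum>z\<in>W j. L (r i) z)"
    and cross: "\<And>i j u w. i \<in> K \<Longrightarrow> j \<in> K \<Longrightarrow> i \<noteq> j \<Longrightarrow> u \<in> W i \<Longrightarrow> w \<in> W j \<Longrightarrow> L u w = L (r i) w"
  shows "char_poly_on (\<Union>i\<in>K. W i) L = char_poly_on K (\<lambda>i j. \<Sum>z\<in>W j. L (r i) z)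
           * (\<Prod>i\<in>K. char_poly_on (W i - {r i}) (\<lambda>u w. L u w - L (r i) w))"
proof -
  define X where "X u w = (if u = w then [:0, 1:] else 0) - [:L u w:]" for u w
  have same_block: "i = j" if "i \<in> K" "j \<in> K" "u \<in> W i" "u \<in> W j" for i j u
    using that disjoint_family_onD[OF disj, of i j] by blast
  have row_sum: "(\<Sum>z\<in>W j. X u z) = (if i = j then [:0, 1:] else 0) - [:\<Sum>z\<in>W j. L u z:]"
    if "i \<in> K" "j \<in> K" "u \<in> W i" for i j u
    using that fin same_block by (auto simp: X_def sum_subtractf sum_to_poly)
  have "char_poly_on (\<Union>i\<in>K. W i) L = det_on K (\<lambda>i j. \<Sum>z\<in>W j. X (r i) z)
           * (\<Prod>i\<in>K. det_on (W i - {r i}) (\<lambda>u w. X u w - X (r i) w))"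
    unfolding char_poly_on_def X_def[symmetric]
  proof (rule det_on_equitable_partition[OF \<open>finite K\<close> fin disj rep])
    show "(\<Sum>z\<in>W j. X u z) = (\<Sum>z\<in>W j. X (r i) z)" if "i \<in> K" "j \<in> K" "u \<in> W i" for i j u
      using that rep rows[OF that] by (simp add: row_sum)
    show "X u w = X (r i) w" if "i \<in> K" "j \<in> K" "i \<noteq> j" "u \<in> W i" "w \<in> W j" for i j u w
      using that rep same_block cross[OF that] by (auto simp: X_def)
  qed
  also have "det_on K (\<lambda>i j. \<Sum>z\<in>W j. X (r i) z) = char_poly_on K (\<lambda>i j. \<Sum>z\<in>W j. L (r i) z)"
    unfolding char_poly_on_def using rep by (intro det_on_cong) (simp add: row_sum)
  also have "(\<Prod>i\<in>K. det_on (W i - {r i}) (\<lambda>u w. X u w - X (r i) w))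
      = (\<Prod>i\<in>K. char_poly_on (W i - {r i}) (\<lambda>u w. L u w - L (r i) w))"
    unfolding char_poly_on_def by (intro prod.cong refl det_on_cong) (auto simp: X_def)
  finally show ?thesis .
qed

lemma char_poly_on_constant_row_sums:
  fixes L :: "'i \<Rightarrow> 'i \<Rightarrow> 'a::idom"
  assumes "finite W" and "r \<in> W" and rows: "\<And>u. u \<in> W \<Longrightarrow> (\<Sum>z\<in>W. L u z) = s"
  shows "char_poly_on W L = [:-s, 1:] * char_poly_on (W - {r}) (\<lambda>u w. L u w - L r w)"
proof -
  have "char_poly_on (\<Union>i\<in>{r}. W) L = char_poly_on {r} (\<lambda>i j. \<Sum>z\<in>W. L r z)
          * (\<Prod>i\<in>{r}. char_poly_on (W - {r}) (\<lambda>u w. L u w - L r w))"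
    by (rule char_poly_on_equitable_partition) (use assms in \<open>auto simp: disjoint_family_on_def\<close>)
  moreover have "char_poly_on {r} (\<lambda>i j. \<Sum>z\<in>W. L r z) = [:-s, 1:]"
    using rows[OF \<open>r \<in> W\<close>] by (simp add: char_poly_on_def det_on_singleton)
  ultimately show ?thesis
    by simp
qed

lemma proots_pcompose_shift:
  fixes p :: "complex poly"
  shows "proots (p \<circ>\<^sub>p [:-c, 1:]) = image_mset (\<lambda>x. x + c) (proots p)"
proof (cases "p = 0")
  case False
  have shift: "(\<Prod>x\<in>#A. [:-x, 1:]) \<circ>\<^sub>p [:-c, 1:] = (\<Prod>x\<in>#image_mset (\<lambda>x. x + c) A. [:-x, 1:])" for A
  proof (induction A)
    case (add x A)
    have "[:-x, 1:] \<circ>\<^sub>p [:-c, 1:] = [:-(x + c), 1:]"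
      by simp
    with add.IH show ?case
      by (simp add: pcompose_mult del: mult_pCons_left)
  qed simp
  have "p \<circ>\<^sub>p [:-c, 1:] = Polynomial.smult (lead_coeff p) (\<Prod>x\<in>#image_mset (\<lambda>x. x + c) (proots p). [:-x, 1:])"
    by (subst (1) complex_poly_decompose_multiset[symmetric]) (simp add: pcompose_smult shift)
  moreover have "proots (\<Prod>x\<in>#A. [:-x, 1:]) = A" for A :: "complex multiset"
  proof (induction A)
    case (add x A)
    have "(\<Prod>y\<in>#A. [:-y, 1:]) \<noteq> 0"
      by auto
    with add.IH show ?case
      by (simp add: proots_mult del: mult_pCons_left)
  qed simp
  ultimately show ?thesis
    using False by simp
qed simp

lemma proots_char_poly_on_remove_row_sum:
  fixes L :: "'i \<Rightarrow> 'i \<Rightarrow> 'a::idom"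
  assumes "finite W" and "r \<in> W" and "\<And>u. u \<in> W \<Longrightarrow> (\<Sum>z\<in>W. L u z) = s"
  shows "proots (char_poly_on (W - {r}) (\<lambda>u w. L u w - L r w)) = proots (char_poly_on W L) - {#s#}"
proof -
  have "proots (char_poly_on W L) = proots ([:-s, 1:] * char_poly_on (W - {r}) (\<lambda>u w. L u w - L r w))"
    using char_poly_on_constant_row_sums[OF assms] by simp
  also have "\<dots> = proots [:-s, 1:] + proots (char_poly_on (W - {r}) (\<lambda>u w. L u w - L r w))"
    by (rule proots_mult) (simp_all add: char_poly_on_nonzero \<open>finite W\<close>)
  finally show ?thesis
    by simp
qed

lemma index_mat_row_sum:
  fixes f :: "'i \<Rightarrow> 'i \<Rightarrow> 'a::comm_ring_1"
  assumes "distinct xs" and "index_mat xs f *\<^sub>v vec (length xs) (\<lambda>_. 1) = c \<cdot>\<^sub>v vec (length xs) (\<lambda>_. 1)"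
    and "u \<in> set xs"
  shows "(\<Sum>z\<in>set xs. f u z) = c"
proof -
  obtain a where a: "a < length xs" "xs ! a = u"
    using assms(3) by (auto simp: in_set_conv_nth)
  have "(\<Sum>b<length xs. f u (xs ! b)) = c"
    using arg_cong[OF assms(2), of "\<lambda>v. v $ a"] a by (simp add: index_mat_def scalar_prod_def atLeast0LessThan)
  then show ?thesis
    using sum.reindex_bij_betw[OF bij_betw_nth[OF assms(1) refl refl], of "f u"] by simp
qed

section \<open>Signed graphs and substitution\<close>

lemma sdeg_eq_card_neighbours:
  assumes "wf_sgraph H"
  shows "sdeg H u = card {w \<in> sV H. {u, w} \<in> sE H}"
proof -
  have "{e \<in> sE H. u \<in> e} = (\<lambda>w. {u, w}) ` {w \<in> sV H. {u, w} \<in> sE H}"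
  proof (intro equalityI subsetI)
    fix e assume "e \<in> {e \<in> sE H. u \<in> e}"
    moreover obtain a b where "e = {a, b}" "a \<in> sV H" "b \<in> sV H"
      using calculation assms by (auto simp: wf_sgraph_def)
    ultimately show "e \<in> (\<lambda>w. {u, w}) ` {w \<in> sV H. {u, w} \<in> sE H}"
      by (auto simp: insert_commute)
  qed auto
  moreover have "inj_on (\<lambda>w. {u, w}) {w \<in> sV H. {u, w} \<in> sE H}"
    by (auto intro: inj_onI simp: doubleton_eq_iff)
  ultimately show ?thesis
    by (simp add: sdeg_def card_image)
qed

definition slap_entry :: "sgraph \<Rightarrow> nat \<Rightarrow> nat \<Rightarrow> complex" where
  "slap_entry H u w = complex_of_real ((if u = w then real (sdeg H u) else 0) - sadj H u w)"

lemma of_real_slap: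
  assumes "finite (sV H)"
  shows "map_mat complex_of_real (slap H) = index_mat (vlist H) (slap_entry H)"
  using assms
  by (intro eq_matI) (auto simp: slap_def vlist_def index_mat_def slap_entry_def nth_eq_iff_index_eq)

lemma spec_slap:
  assumes "finite (sV H)"
  shows "spec (slap H) = proots (char_poly_on (sV H) (slap_entry H))"
  using assms by (simp add: spec_def of_real_slap char_poly_index_mat vlist_def)

lemma slap_row_sum:
  assumes "finite (sV H)" and "u \<in> sV H"
    and "map_mat complex_of_real (slap H) *\<^sub>v vec (card (sV H)) (\<lambda>_. 1) = c \<cdot>\<^sub>v vec (card (sV H)) (\<lambda>_. 1)"
  shows "(\<Sum>z\<in>sV H. slap_entry H u z) = c"
  using index_mat_row_sum[of "vlist H" "slap_entry H" c u] assms by (simp add: of_real_slap vlist_def)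

locale substitution =
  fixes G' :: sgraph and k :: nat and Gs :: "nat \<Rightarrow> sgraph"
  assumes wf_quotient: "wf_sgraph G'"
    and wf_blocks: "\<And>i. i < k \<Longrightarrow> wf_sgraph (Gs i)"
    and disjoint_blocks: "\<And>i j. i < k \<Longrightarrow> j < k \<Longrightarrow> i \<noteq> j \<Longrightarrow> sV (Gs i) \<inter> sV (Gs j) = {}"
begin

abbreviation G :: sgraph where "G \<equiv> subst_all G' k Gs"

lemma same_block: "i < k \<Longrightarrow> j < k \<Longrightarrow> u \<in> sV (Gs i) \<Longrightarrow> u \<in> sV (Gs j) \<Longrightarrow> i = j"
  using disjoint_blocks by blast

lemma vertices_subst: "sV G = (\<Union>i<k. sV (Gs i))"
  by (simp add: subst_all_def)

lemma finite_block: "i < k \<Longrightarrow> finite (sV (Gs i))"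
  using wf_blocks by (simp add: wf_sgraph_def)

lemma doubleton_mem_subst_iff:
  assumes inside: "\<And>i e. i < k \<Longrightarrow> e \<in> T i \<Longrightarrow> e \<subseteq> sV (Gs i)" and loopfree: "\<And>i. {i, i} \<notin> S"
    and "i < k" "j < k" "u \<in> sV (Gs i)" "w \<in> sV (Gs j)"
  shows "{u, w} \<in> (\<Union>i<k. T i) \<union>
           {{u, w} | i j u w. i < k \<and> j < k \<and> {i, j} \<in> S \<and> u \<in> sV (Gs i) \<and> w \<in> sV (Gs j)}
         \<longleftrightarrow> (if i = j then {u, w} \<in> T i else {i, j} \<in> S)"
proof
  assume "{u, w} \<in> (\<Union>i<k. T i) \<union>
           {{u, w} | i j u w. i < k \<and> j < k \<and> {i, j} \<in> S \<and> u \<in> sV (Gs i) \<and> w \<in> sV (Gs j)}"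
  then consider (inner) i' where "i' < k" "{u, w} \<in> T i'"
    | (cross) i' j' where "i' < k" "j' < k" "{i', j'} \<in> S"
        "(u \<in> sV (Gs i') \<and> w \<in> sV (Gs j')) \<or> (u \<in> sV (Gs j') \<and> w \<in> sV (Gs i'))"
    by (auto simp: doubleton_eq_iff)
  then show "if i = j then {u, w} \<in> T i else {i, j} \<in> S"
  proof cases
    case inner
    then show ?thesis
      using inside[OF inner] same_block assms(3-6) by (metis insert_subset)
  next
    case cross
    then have "{i, j} = {i', j'}"
      using same_block assms(3-6) by (metis insert_commute)
    then show ?thesis
      using cross loopfree by (metis insert_absorb2)
  qed
next
  show "{u, w} \<in> (\<Union>i<k. T i) \<union>
           {{u, w} | i j u w. i < k \<and> j < k \<and> {i, j} \<in> S \<and> u \<in> sV (Gs i) \<and> w \<in> sV (Gs j)}"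
    if "if i = j then {u, w} \<in> T i else {i, j} \<in> S"
    using that assms(3-6) by (auto split: if_splits)
qed

lemma edge_subst_iff:
  assumes "i < k" "j < k" "u \<in> sV (Gs i)" "w \<in> sV (Gs j)"
  shows "{u, w} \<in> sE G \<longleftrightarrow> (if i = j then {u, w} \<in> sE (Gs i) else {i, j} \<in> sE G')"
  unfolding subst_all_def sgraph.simps
  by (rule doubleton_mem_subst_iff[OF _ _ assms])
    (use wf_blocks wf_quotient in \<open>auto simp: wf_sgraph_def doubleton_eq_iff\<close>)

lemma odd_edge_subst_iff:
  assumes "i < k" "j < k" "u \<in> sV (Gs i)" "w \<in> sV (Gs j)"
  shows "{u, w} \<in> sSig G \<longleftrightarrow> (if i = j then {u, w} \<in> sSig (Gs i) else {i, j} \<in> sSig G')"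
  unfolding subst_all_def sgraph.simps
  by (rule doubleton_mem_subst_iff[OF _ _ assms])
    (use wf_blocks wf_quotient in \<open>auto simp: wf_sgraph_def doubleton_eq_iff\<close>)

lemma sadj_subst:
  assumes "i < k" "j < k" "u \<in> sV (Gs i)" "w \<in> sV (Gs j)"
  shows "sadj G u w = (if i = j then sadj (Gs i) u w else sadj G' i j)"
  using edge_subst_iff[OF assms] odd_edge_subst_iff[OF assms] by (simp add: sadj_def)

lemma quotient_loopfree: "{i, j} \<in> sE G' \<Longrightarrow> i \<noteq> j"
  using wf_quotient by (auto simp: wf_sgraph_def doubleton_eq_iff)

lemma wf_subst: "wf_sgraph G"
proof -
  have "finite (sV G)"
    using wf_blocks by (auto simp: vertices_subst wf_sgraph_def)
  moreover have "e \<in> {{u, w} |u w. u \<in> sV G \<and> w \<in> sV G \<and> u \<noteq> w}" if "e \<in> sE G" for e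
  proof -
    consider (inner) i where "i < k" "e \<in> sE (Gs i)"
      | (cross) i j u w where "e = {u, w}" "i < k" "j < k" "{i, j} \<in> sE G'"
          "u \<in> sV (Gs i)" "w \<in> sV (Gs j)"
      using \<open>e \<in> sE G\<close> by (auto simp: subst_all_def)
    then show ?thesis
    proof cases
      case inner
      then obtain u w where "e = {u, w}" "u \<in> sV (Gs i)" "w \<in> sV (Gs i)" "u \<noteq> w"
        using wf_blocks[of i] by (auto simp: wf_sgraph_def)
      with inner show ?thesis
        by (auto simp: vertices_subst)
    next
      case cross
      then have "u \<noteq> w"
        using quotient_loopfree same_block by blast
      with cross show ?thesis
        by (auto simp: vertices_subst)
    qed
  qed
  moreover have "sSig G \<subseteq> sE G"
    unfolding subst_all_def sgraph.simps
  proof (intro Un_mono UN_mono)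
    show "sSig (Gs i) \<subseteq> sE (Gs i)" if "i \<in> {..<k}" for i
      using wf_blocks that by (simp add: wf_sgraph_def)
    show "{{u, w} |i j u w. i < k \<and> j < k \<and> {i, j} \<in> sSig G' \<and> u \<in> sV (Gs i) \<and> w \<in> sV (Gs j)}
        \<subseteq> {{u, w} |i j u w. i < k \<and> j < k \<and> {i, j} \<in> sE G' \<and> u \<in> sV (Gs i) \<and> w \<in> sV (Gs j)}"
      using wf_quotient unfolding wf_sgraph_def by blast
  qed simp
  ultimately show ?thesis
    unfolding wf_sgraph_def by blast
qed

lemma neighbours_subst:
  assumes "i < k" "u \<in> sV (Gs i)"
  shows "{w \<in> sV G. {u, w} \<in> sE G}
           = {w \<in> sV (Gs i). {u, w} \<in> sE (Gs i)} \<union> (\<Union>j\<in>{j. j < k \<and> {i, j} \<in> sE G'}. sV (Gs j))"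
proof (intro equalityI subsetI)
  fix w assume "w \<in> {w \<in> sV G. {u, w} \<in> sE G}"
  then obtain j where "j < k" "w \<in> sV (Gs j)" "{u, w} \<in> sE G"
    by (auto simp: vertices_subst)
  then show "w \<in> {w \<in> sV (Gs i). {u, w} \<in> sE (Gs i)} \<union> (\<Union>j\<in>{j. j < k \<and> {i, j} \<in> sE G'}. sV (Gs j))"
    using edge_subst_iff[OF assms(1) _ assms(2)] by (auto split: if_splits)
next
  fix w assume "w \<in> {w \<in> sV (Gs i). {u, w} \<in> sE (Gs i)} \<union> (\<Union>j\<in>{j. j < k \<and> {i, j} \<in> sE G'}. sV (Gs j))"
  then consider "w \<in> sV (Gs i)" "{u, w} \<in> sE (Gs i)"
    | j where "j < k" "{i, j} \<in> sE G'" "w \<in> sV (Gs j)"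
    by auto
  then show "w \<in> {w \<in> sV G. {u, w} \<in> sE G}"
    using edge_subst_iff[OF assms(1) _ assms(2)] assms(1) quotient_loopfree
    by cases (auto simp: vertices_subst)
qed

lemma sdeg_subst:
  assumes "i < k" "u \<in> sV (Gs i)"
  shows "sdeg G u = sdeg (Gs i) u + nbsize G' k Gs i"
proof -
  define A where "A = {w \<in> sV (Gs i). {u, w} \<in> sE (Gs i)}"
  define J where "J = {j. j < k \<and> {i, j} \<in> sE G'}"
  have "A \<inter> (\<Union>j\<in>J. sV (Gs j)) = {}"
    using same_block assms(1) quotient_loopfree by (fastforce simp: A_def J_def)
  moreover have "card (\<Union>j\<in>J. sV (Gs j)) = nbsize G' k Gs i"
    unfolding nbsize_def J_def[symmetric]
    by (rule card_UN_disjoint) (use finite_block same_block in \<open>auto simp: J_def\<close>)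
  moreover have "card A = sdeg (Gs i) u"
    unfolding A_def by (rule sdeg_eq_card_neighbours[OF wf_blocks[OF assms(1)], symmetric])
  ultimately show ?thesis
    using finite_block assms(1) unfolding sdeg_eq_card_neighbours[OF wf_subst] neighbours_subst[OF assms]
      A_def[symmetric] J_def[symmetric]
    by (simp add: card_Un_disjoint A_def J_def)
qed


lemma slap_entry_subst:
  assumes "i < k" "j < k" "u \<in> sV (Gs i)" "w \<in> sV (Gs j)"
  shows "slap_entry G u w = (if i = j then slap_entry (Gs i) u w + (if u = w then of_nat (nbsize G' k Gs i) else 0)
                              else - complex_of_real (sadj G' i j))"
proof (cases "i = j")
  case True
  then show ?thesis
    using sadj_subst[OF assms] sdeg_subst[OF assms(1,3)] by (cases "u = w") (simp_all add: slap_entry_def)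
next
  case False
  then have "u \<noteq> w"
    using assms same_block by blast
  with False show ?thesis
    using sadj_subst[OF assms] by (simp add: slap_entry_def)
qed

lemma block_row_sum_subst:
  assumes rows: "\<And>i u. i < k \<Longrightarrow> u \<in> sV (Gs i) \<Longrightarrow> (\<Sum>z\<in>sV (Gs i). slap_entry (Gs i) u z) = lam i"
    and "i < k" "j < k" "u \<in> sV (Gs i)"
  shows "(\<Sum>z\<in>sV (Gs j). slap_entry G u z) = (if i = j then lam i + of_nat (nbsize G' k Gs i)
           else - of_nat (card (sV (Gs j))) * complex_of_real (sadj G' i j))"
proof (cases "i = j")
  case True
  then show ?thesis
    using finite_block[OF assms(2)] assms(2-4) rows[OF assms(2,4)] by (simp add: slap_entry_subst sum.distrib)
next
  case False
  then show ?thesis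
    using assms(2-4) by (simp add: slap_entry_subst)
qed

lemma quotM_subst:
  assumes rep: "\<And>i. i < k \<Longrightarrow> r i \<in> sV (Gs i)"
    and rows: "\<And>i u. i < k \<Longrightarrow> u \<in> sV (Gs i) \<Longrightarrow> (\<Sum>z\<in>sV (Gs i). slap_entry (Gs i) u z) = lam i"
  shows "quotM G' k Gs lam = index_mat [0..<k] (\<lambda>i j. \<Sum>z\<in>sV (Gs j). slap_entry G (r i) z)"
proof (rule eq_matI)
  fix i j assume "i < dim_row (index_mat [0..<k] (\<lambda>i j. \<Sum>z\<in>sV (Gs j). slap_entry G (r i) z))"
    and "j < dim_col (index_mat [0..<k] (\<lambda>i j. \<Sum>z\<in>sV (Gs j). slap_entry G (r i) z))"
  then have "i < k" "j < k"
    by (simp_all add: index_mat_def)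
  moreover have "{i, j} \<in> sE G'" if "{i, j} \<in> sSig G'"
    using that wf_quotient by (auto simp: wf_sgraph_def)
  ultimately show "quotM G' k Gs lam $$ (i, j) = index_mat [0..<k] (\<lambda>i j. \<Sum>z\<in>sV (Gs j). slap_entry G (r i) z) $$ (i, j)"
    using block_row_sum_subst[OF rows _ _ rep] by (auto simp: quotM_def index_mat_def sadj_def)
qed (simp_all add: quotM_def index_mat_def)

lemma proots_reduced_block_subst:
  assumes "i < k" and "r \<in> sV (Gs i)"
    and rows: "\<And>u. u \<in> sV (Gs i) \<Longrightarrow> (\<Sum>z\<in>sV (Gs i). slap_entry (Gs i) u z) = c"
  shows "proots (char_poly_on (sV (Gs i) - {r}) (\<lambda>u w. slap_entry G u w - slap_entry G r w))
           = image_mset (\<lambda>x. x + of_nat (nbsize G' k Gs i)) (spec (slap (Gs i)) - {#c#})"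
proof -
  have "char_poly_on (sV (Gs i) - {r}) (\<lambda>u w. slap_entry G u w - slap_entry G r w)
      = char_poly_on (sV (Gs i) - {r}) (\<lambda>u w. slap_entry (Gs i) u w - slap_entry (Gs i) r w
                                              + (if u = w then of_nat (nbsize G' k Gs i) else 0))"
    unfolding char_poly_on_def using assms(1,2) by (intro det_on_cong) (simp add: slap_entry_subst)
  then show ?thesis
    using finite_block[OF assms(1)] assms(2) rows
    by (simp add: char_poly_on_shift proots_pcompose_shift proots_char_poly_on_remove_row_sum spec_slap)
qed

lemma spec_slap_subst:
  assumes nonempty: "\<And>i. i < k \<Longrightarrow> sV (Gs i) \<noteq> {}"
    and rows: "\<And>i u. i < k \<Longrightarrow> u \<in> sV (Gs i) \<Longrightarrow> (\<Sum>z\<in>sV (Gs i). slap_entry (Gs i) u z) = lam i"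
  shows "spec (slap G) = cspec (quotM G' k Gs lam)
           + (\<Sum>i<k. image_mset (\<lambda>x. x + of_nat (nbsize G' k Gs i)) (spec (slap (Gs i)) - {#lam i#}))"
proof -
  define r where "r i = Min (sV (Gs i))" for i
  define Q where "Q = char_poly_on {..<k} (\<lambda>i j. \<Sum>z\<in>sV (Gs j). slap_entry G (r i) z)"
  define B where "B i = char_poly_on (sV (Gs i) - {r i}) (\<lambda>u w. slap_entry G u w - slap_entry G (r i) w)" for i
  have rep: "r i \<in> sV (Gs i)" if "i < k" for i
    using finite_block[OF that] nonempty[OF that] by (simp add: r_def)
  have partition: "char_poly_on (\<Union>i\<in>{..<k}. sV (Gs i)) (slap_entry G) = Q * (\<Prod>i<k. B i)"
    unfolding Q_def B_def
  proof (rule char_poly_on_equitable_partition)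
    show "disjoint_family_on (\<lambda>i. sV (Gs i)) {..<k}"
      using disjoint_blocks by (auto simp: disjoint_family_on_def)
    show "(\<Sum>z\<in>sV (Gs j). slap_entry G u z) = (\<Sum>z\<in>sV (Gs j). slap_entry G (r i) z)"
      if "i \<in> {..<k}" "j \<in> {..<k}" "u \<in> sV (Gs i)" for i j u
      using that rep block_row_sum_subst[OF rows] by simp
    show "slap_entry G u w = slap_entry G (r i) w"
      if "i \<in> {..<k}" "j \<in> {..<k}" "i \<noteq> j" "u \<in> sV (Gs i)" "w \<in> sV (Gs j)" for i j u w
      using that rep by (simp add: slap_entry_subst)
  qed (simp_all add: finite_block rep)
  have B_nonzero: "B i \<noteq> 0" if "i < k" for i
    using finite_block[OF that] by (simp add: B_def char_poly_on_nonzero)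
  have "spec (slap G) = proots (Q * (\<Prod>i<k. B i))"
    using partition wf_subst by (simp add: spec_slap vertices_subst wf_sgraph_def)
  also have "\<dots> = proots Q + (\<Sum>i<k. proots (B i))"
    using B_nonzero proots_prod[of "{..<k}" B]
    by (simp add: proots_mult Q_def char_poly_on_nonzero)
  moreover have "proots Q = cspec (quotM G' k Gs lam)"
    using quotM_subst[OF rep rows] by (simp add: Q_def cspec_def char_poly_index_mat atLeast0LessThan)
  moreover have "(\<Sum>i<k. proots (B i))
      = (\<Sum>i<k. image_mset (\<lambda>x. x + of_nat (nbsize G' k Gs i)) (spec (slap (Gs i)) - {#lam i#}))"
    unfolding B_def using rep rows by (intro sum.cong) (simp_all add: proots_reduced_block_subst)
  ultimately show ?thesis
    by simp
qed

end

theorem lemma3p6: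
  fixes G' :: sgraph and k :: nat and Gs :: "nat \<Rightarrow> sgraph"
    and ls :: "nat \<Rightarrow> complex list"
  assumes "wf_sgraph G'" and "sV G' = {0..<k}"
    and "\<And>i. i < k \<Longrightarrow> wf_sgraph (Gs i)"
    and "\<And>i. i < k \<Longrightarrow> sV (Gs i) \<noteq> {}"
    and "\<And>i j. i < k \<Longrightarrow> j < k \<Longrightarrow> i \<noteq> j \<Longrightarrow> sV (Gs i) \<inter> sV (Gs j) = {}"
    and "\<And>i. i < k \<Longrightarrow> length (ls i) = card (sV (Gs i))"
    and "\<And>i. i < k \<Longrightarrow> mset (ls i) = spec (slap (Gs i))"
    and "\<And>i. i < k \<Longrightarrow>
           map_mat complex_of_real (slap (Gs i)) *\<^sub>v (vec (card (sV (Gs i))) (\<lambda>_. 1))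
             = last (ls i) \<cdot>\<^sub>v (vec (card (sV (Gs i))) (\<lambda>_. 1))"
  shows "spec (slap (subst_all G' k Gs)) =
           cspec (quotM G' k Gs (\<lambda>i. last (ls i)))
           + (\<Sum>i<k. mset (map (\<lambda>x. x + of_nat (nbsize G' k Gs i)) (butlast (ls i))))"
proof -
  interpret substitution G' k Gs
    using assms(1,3,5) by unfold_locales
  have rows: "(\<Sum>z\<in>sV (Gs i). slap_entry (Gs i) u z) = last (ls i)" if "i < k" "u \<in> sV (Gs i)" for i u
    using slap_row_sum[OF finite_block[OF that(1)] that(2) assms(8)[OF that(1)]] .
  have "mset (butlast (ls i)) = spec (slap (Gs i)) - {#last (ls i)#}" if "i < k" for i
  proof -
    have "ls i \<noteq> []"
      using assms(4,6)[OF that] finite_block[OF that] by auto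
    have "mset (butlast (ls i) @ [last (ls i)]) = mset (butlast (ls i)) + {#last (ls i)#}"
      by simp
    then have "mset (ls i) = mset (butlast (ls i)) + {#last (ls i)#}"
      using append_butlast_last_id[OF \<open>ls i \<noteq> []\<close>] by simp
    then show ?thesis
      using assms(7)[OF that] by simp
  qed
  then have "(\<Sum>i<k. mset (map (\<lambda>x. x + of_nat (nbsize G' k Gs i)) (butlast (ls i))))
      = (\<Sum>i<k. image_mset (\<lambda>x. x + of_nat (nbsize G' k Gs i)) (spec (slap (Gs i)) - {#last (ls i)#}))"
    by (intro sum.cong) simp_all
  then show ?thesis
    using spec_slap_subst[OF assms(4) rows] by simp
qed

end
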